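(* In the setting below with $P=\mathfrak S$ and the absolute error criterion: (i) if $\{S_d\}$ is polynomially tractable and $\lambda_1\ge1$, then $b_d\in O(\ln d)$; (ii) if $\{S_d\}$ is strongly polynomially tractable and $\lambda_1\ge1$, then $b_d\in O(1)$ and $\lambda_2<1/\lambda_1$.
   Context: Setting: $S_1:H_1\to G_1$ is a compact linear operator between real Hilbert spaces ($H_1$ infinite-dimensional separable); $\lambda=(\lambda_m)_{m\in\mathbb N}$, $\lambda_1\ge\lambda_2\ge\dots\ge0$, are the eigenvalues of $S_1^\dagger S_1$. $S_d=S_1^{\otimes d}:H_1^{\otimes d}\to G_1^{\otimes d}$. For each $d$ fix $\emptyset\ne I_d=\{i_1<\dots<i_{a_d}\}\subset\{1,\dots,d\}$ ($I_1=\{1\}$), put $a_d=\#I_d$, $b_d=d-a_d$, and fix one type $P\in\{\mathfrak S,\mathfrak A\}$ for all $d$; the problem $\{S_d\}$ is the family of restrictions of $S_d$ to the $I_d$-symmetric subspace (if $P=\mathfrak S$) or $I_d$-antisymmetric subspace (if $P=\mathfrak A$) of $H_1^{\otimes d}$, i.e. the range of $\frac1{a_d!}\sum_{\pi}(\pm1)U_\pi$, the sum over permutations $\pi$ of $\{1,\dots,d\}$ fixing all points outside $I_d$, $U_\pi(f_1\otimes\cdots\otimes f_d)=f_{\pi(1)}\otimes\cdots\otimes f_{\pi(d)}$, sign $(-1)^{|\pi|}$ used for $\mathfrak A$. Let $\nabla_d=\{k\in\mathbb N^d:k_{i_1}\le\dots\le k_{i_{a_d}}\}$ for $P=\mathfrak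 S$ and with strict inequalities for $P=\mathfrak A$; $\lambda_{d,k}=\prod_{l=1}^d\lambda_{k_l}$; $\psi:\mathbb N\to\nabla_d$ a bijection with $\lambda_{d,\psi(1)}\ge\lambda_{d,\psi(2)}\ge\cdots$. These are exactly the eigenvalues of $S_d^\dagger S_d$ on the subspace, and the information complexity (absolute error) is $n(\epsilon,d)=\#\{k\in\nabla_d:\lambda_{d,k}>\epsilon^2\}$, the initial error $\epsilon^{\rm init}_d=\sqrt{\lambda_{d,\psi(1)}}$ (equal to $\lambda_1^{d/2}$ if $P=\mathfrak S$, and $\sqrt{\lambda_1^{b_d}\lambda_1\lambda_2\cdots\lambda_{a_d}}$ if $P=\mathfrak A$). Polynomially tractable: $\exists C,p>0,q\ge0$ with $n(\epsilon,d)\le C\epsilon^{-p}d^q$ for all $d\in\mathbb N,\epsilon\in(0,1]$; strongly polynomially tractable: this with $q=0$. Standing assumptions: $\lambda_2>0$ and $\epsilon_d^{\rm init}>0$ for all $d$. $\ell_\tau$: sequences with $\|\lambda\|_{\ell_\tau}^\tau=\sum_m\lambda_m^\tau<\infty$. *)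

theory Defs
  imports "HOL-Analysis.Analysis" "HOL-Library.Landau_Symbols"
begin

text \<open>Eigenvalue sequence of S_1^dagger S_1, indexed from 1 (value at 0 is irrelevant).\<close>
definition eigen_seq :: "(nat \<Rightarrow> real) \<Rightarrow> bool" where
  "eigen_seq lam \<longleftrightarrow>
     (\<forall>m\<ge>1. 0 \<le> lam m) \<and> (\<forall>m\<ge>1. lam (Suc m) \<le> lam m) \<and>
     (lam \<longlonglongrightarrow> 0)"

definition index_family :: "(nat \<Rightarrow> nat set) \<Rightarrow> bool" where
  "index_family I \<longleftrightarrow> (\<forall>d\<ge>1. I d \<noteq> {} \<and> I d \<subseteq> {1..d}) \<and> I 1 = {1}"

definition bdim :: "(nat \<Rightarrow> nat set) \<Rightarrow> nat \<Rightarrow> nat" where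
  "bdim I d = d - card (I d)"

definition nabla_sym :: "(nat \<Rightarrow> nat set) \<Rightarrow> nat \<Rightarrow> (nat \<Rightarrow> nat) set" where
  "nabla_sym I d = {k \<in> {1..d} \<rightarrow>\<^sub>E {1..}. \<forall>i\<in>I d. \<forall>j\<in>I d. i \<le> j \<longrightarrow> k i \<le> k j}"

definition lam_d :: "(nat \<Rightarrow> real) \<Rightarrow> nat \<Rightarrow> (nat \<Rightarrow> nat) \<Rightarrow> real" where
  "lam_d lam d k = (\<Prod>l\<in>{1..d}. lam (k l))"

text \<open>Information complexity, absolute error criterion.\<close>
definition info_compl_sym :: "(nat \<Rightarrow> real) \<Rightarrow> (nat \<Rightarrow> nat set) \<Rightarrow> real \<Rightarrow> nat \<Rightarrow> nat" where
  "info_compl_sym lam I \<epsilon> d = card {k \<in> nabla_sym I d. lam_d lam d k > \<epsilon>\<^sup>2}"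

definition poly_tractable :: "(real \<Rightarrow> nat \<Rightarrow> nat) \<Rightarrow> bool" where
  "poly_tractable n \<longleftrightarrow> (\<exists>C p q. C > 0 \<and> p > 0 \<and> q \<ge> 0 \<and>
     (\<forall>d\<ge>1. \<forall>\<epsilon>. 0 < \<epsilon> \<and> \<epsilon> \<le> 1 \<longrightarrow> real (n \<epsilon> d) \<le> C * \<epsilon> powr (-p) * real d powr q))"

definition strongly_poly_tractable :: "(real \<Rightarrow> nat \<Rightarrow> nat) \<Rightarrow> bool" where
  "strongly_poly_tractable n \<longleftrightarrow> (\<exists>C p. C > 0 \<and> p > 0 \<and>
     (\<forall>d\<ge>1. \<forall>\<epsilon>. 0 < \<epsilon> \<and> \<epsilon> \<le> 1 \<longrightarrow> real (n \<epsilon> d) \<le> C * \<epsilon> powr (-p)))"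

end

theory Submission
  imports Defs
begin

(* Lower bounds for the information complexity n(eps,d) come from
   a special family of multi-indices: for T a subset of {1..d}, two_on d T is the
   multi-index equal to 2 on T and 1 elsewhere.  Its eigenvalue is
   lam 2 ^ |T| * lam 1 ^ (d - |T|), and it lies in nabla_d as soon as T is upward
   closed inside I_d.  Hence n(eps,d) is at least the number of such sets T whose
   eigenvalue exceeds eps^2 (lemma card_le_info_compl_sym).
   (i)  The m-element subsets of {1..d} - I_d (a set with b_d elements) give
        (b_d choose m) <= n(eps,d) for eps^2 < min 1 (lam 2) ^ m.  Choosing eps
        accordingly, polynomial tractability yields (b_d choose m) <= R^m once
        m >= ln d, and since (b/m)^m <= (b choose m) we get b_d <= m R = O(ln d).
   (ii) Under strong tractability the same bound with m = 1 shows b_d = O(1).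
        If lam 1 * lam 2 >= 1, the upper tails of I_d starting beyond d/2 have
        eigenvalue >= 1, so n(1/2,d) >= d/2 - b_d, which is unbounded in d. *)

lemma eigen_seq_nonneg: "eigen_seq lam \<Longrightarrow> 1 \<le> m \<Longrightarrow> 0 \<le> lam m"
  unfolding eigen_seq_def by auto

lemma eigen_seq_le_first:
  assumes "eigen_seq lam" "1 \<le> m" shows "lam m \<le> lam 1"
  using assms(2)
proof (induction m rule: dec_induct)
  case base then show ?case by simp
next
  case (step n)
  have "lam (Suc n) \<le> lam n" using assms(1) step(1) unfolding eigen_seq_def by simp
  then show ?case using step.IH by linarith
qed

text \<open>A product eigenvalue is controlled by any single factor: all other
  factors are at most max 1 (lam 1).\<close>

lemma lam_d_le_factor:
  assumes E: "eigen_seq lam" and k: "k \<in> {1..d} \<rightarrow>\<^sub>E {1..}" and l: "l \<in> {1..d}"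
  shows "lam_d lam d k \<le> lam (k l) * max 1 (lam 1) ^ d"
proof -
  define M where "M = max 1 (lam 1)"
  have bounds: "0 \<le> lam (k j) \<and> lam (k j) \<le> M" if "j \<in> {1..d}" for j
  proof -
    have "1 \<le> k j" using k that by (auto simp: PiE_iff)
    then show ?thesis
      using eigen_seq_nonneg[OF E] eigen_seq_le_first[OF E] unfolding M_def
      by (meson max.coboundedI2)
  qed
  have "lam_d lam d k = lam (k l) * (\<Prod>j\<in>{1..d} - {l}. lam (k j))"
    unfolding lam_d_def using l by (simp add: prod.remove)
  also have "\<dots> \<le> lam (k l) * (\<Prod>j\<in>{1..d} - {l}. M)"
  proof (rule mult_left_mono)
    show "(\<Prod>j\<in>{1..d} - {l}. lam (k j)) \<le> (\<Prod>j\<in>{1..d} - {l}. M)"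
      using bounds by (intro prod_mono) blast
    show "0 \<le> lam (k l)" using bounds[OF l] by blast
  qed
  also have "(\<Prod>j\<in>{1..d} - {l}. M) = M ^ (d - 1)" using l by simp
  also have "lam (k l) * M ^ (d - 1) \<le> lam (k l) * M ^ d"
    using bounds[OF l] by (intro mult_left_mono power_increasing) (simp_all add: M_def)
  finally show ?thesis unfolding M_def .
qed

text \<open>Since lam m \<rightarrow> 0, only finitely many multi-indices have eigenvalue
  above a positive threshold, so the information complexity is a genuine count.\<close>

lemma finite_large_eigen_indices:
  assumes E: "eigen_seq lam" and e: "\<epsilon> > 0"
  shows "finite {k \<in> nabla_sym I d. lam_d lam d k > \<epsilon>\<^sup>2}"
proof -
  define M where "M = max 1 (lam 1)"
  have M: "0 < M ^ d" by (simp add: M_def)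
  have "\<epsilon>\<^sup>2 / M ^ d > 0" using e M by simp
  moreover have "lam \<longlonglongrightarrow> 0" using E unfolding eigen_seq_def by simp
  ultimately obtain N where N: "\<And>n. n \<ge> N \<Longrightarrow> lam n < \<epsilon>\<^sup>2 / M ^ d"
    using order_tendstoD(2)[of lam 0 sequentially "\<epsilon>\<^sup>2 / M ^ d"]
    unfolding eventually_sequentially by blast
  have "{k \<in> nabla_sym I d. lam_d lam d k > \<epsilon>\<^sup>2} \<subseteq> {1..d} \<rightarrow>\<^sub>E {..<N}"
  proof
    fix k assume "k \<in> {k \<in> nabla_sym I d. lam_d lam d k > \<epsilon>\<^sup>2}"
    then have k: "k \<in> {1..d} \<rightarrow>\<^sub>E {1..}" and big: "\<epsilon>\<^sup>2 < lam_d lam d k"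
      unfolding nabla_sym_def by auto
    have "k l < N" if l: "l \<in> {1..d}" for l
    proof (rule ccontr)
      assume "\<not> k l < N"
      then have "lam (k l) < \<epsilon>\<^sup>2 / M ^ d" using N by simp
      then have "lam (k l) * M ^ d < \<epsilon>\<^sup>2" using M by (simp add: pos_less_divide_eq)
      then show False using lam_d_le_factor[OF E k l] big unfolding M_def by linarith
    qed
    then show "k \<in> {1..d} \<rightarrow>\<^sub>E {..<N}" using k by (auto simp: PiE_iff)
  qed
  moreover have "finite ({1..d} \<rightarrow>\<^sub>E {..<N})" by (intro finite_PiE) auto
  ultimately show ?thesis by (rule finite_subset)
qed

definition two_on :: "nat \<Rightarrow> nat set \<Rightarrow> nat \<Rightarrow> nat" where
  "two_on d T = restrict (\<lambda>i. if i \<in> T then 2 else 1) {1..d}"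

lemma two_on_apply: "i \<in> {1..d} \<Longrightarrow> two_on d T i = (if i \<in> T then 2 else 1)"
  unfolding two_on_def by simp

lemma lam_d_two_on:
  assumes "T \<subseteq> {1..d}"
  shows "lam_d lam d (two_on d T) = lam 2 ^ card T * lam 1 ^ (d - card T)"
proof -
  have "lam_d lam d (two_on d T) = (\<Prod>l\<in>{1..d}. if l \<in> T then lam 2 else lam 1)"
    unfolding lam_d_def by (intro prod.cong) (auto simp: two_on_apply)
  also have "\<dots> = (\<Prod>l\<in>T. lam 2) * (\<Prod>l\<in>{1..d} - T. lam 1)"
    using assms by (simp add: prod.If_cases Int_absorb1 Diff_eq)
  finally have "lam_d lam d (two_on d T) = (\<Prod>l\<in>T. lam 2) * (\<Prod>l\<in>{1..d} - T. lam 1)" .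
  moreover have "card ({1..d} - T) = d - card T"
    using assms by (simp add: card_Diff_subset finite_subset)
  ultimately show ?thesis by simp
qed

lemma two_on_in_nabla_sym:
  assumes "I d \<subseteq> {1..d}"
    and up: "\<And>i j. i \<in> I d \<Longrightarrow> j \<in> I d \<Longrightarrow> i \<le> j \<Longrightarrow> i \<in> T \<Longrightarrow> j \<in> T"
  shows "two_on d T \<in> nabla_sym I d"
  unfolding nabla_sym_def
proof (intro CollectI conjI ballI impI)
  show "two_on d T \<in> {1..d} \<rightarrow>\<^sub>E {1..}" unfolding two_on_def by (simp add: PiE_iff)
  fix i j assume ij: "i \<in> I d" "j \<in> I d" "i \<le> j"
  then have "i \<in> {1..d}" "j \<in> {1..d}" using assms(1) by auto
  then show "two_on d T i \<le> two_on d T j"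
    using up[OF ij] by (auto simp: two_on_apply)
qed

lemma inj_on_two_on: "inj_on (two_on d) (Pow {1..d})"
proof (rule inj_onI)
  fix A B assume A: "A \<in> Pow {1..d}" and B: "B \<in> Pow {1..d}" and eq: "two_on d A = two_on d B"
  have "x \<in> A \<longleftrightarrow> x \<in> B" if "x \<in> {1..d}" for x
  proof -
    have "(if x \<in> A then 2 else 1) = (if x \<in> B then (2::nat) else 1)"
      using fun_cong[OF eq, of x] two_on_apply[OF that] by metis
    then show ?thesis by (cases "x \<in> A"; cases "x \<in> B") auto
  qed
  then show "A = B" using A B by blast
qed

lemma card_le_info_compl_sym:
  assumes E: "eigen_seq lam" and e: "\<epsilon> > 0" and Id: "I d \<subseteq> {1..d}"
    and F: "F \<subseteq> Pow {1..d}"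
    and up: "\<And>T i j. T \<in> F \<Longrightarrow> i \<in> I d \<Longrightarrow> j \<in> I d \<Longrightarrow> i \<le> j \<Longrightarrow> i \<in> T \<Longrightarrow> j \<in> T"
    and big: "\<And>T. T \<in> F \<Longrightarrow> \<epsilon>\<^sup>2 < lam 2 ^ card T * lam 1 ^ (d - card T)"
  shows "card F \<le> info_compl_sym lam I \<epsilon> d"
proof -
  have "card F = card (two_on d ` F)"
    using inj_on_subset[OF inj_on_two_on F] by (simp add: card_image)
  also have "\<dots> \<le> card {k \<in> nabla_sym I d. lam_d lam d k > \<epsilon>\<^sup>2}"
  proof (rule card_mono[OF finite_large_eigen_indices[OF E e]], rule image_subsetI)
    fix T assume T: "T \<in> F"
    have TD: "T \<subseteq> {1..d}" using F T by blast
    have "two_on d T \<in> nabla_sym I d"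
      by (rule two_on_in_nabla_sym[where I = I and d = d, OF Id]) (rule up[OF T])
    moreover have "\<epsilon>\<^sup>2 < lam_d lam d (two_on d T)"
      using big[OF T] by (simp only: lam_d_two_on[OF TD])
    ultimately show "two_on d T \<in> {k \<in> nabla_sym I d. lam_d lam d k > \<epsilon>\<^sup>2}" by blast
  qed
  finally show ?thesis unfolding info_compl_sym_def .
qed

lemma index_family_subset: "index_family I \<Longrightarrow> 1 \<le> d \<Longrightarrow> I d \<subseteq> {1..d}"
  unfolding index_family_def by auto

lemma card_complement_index_set:
  assumes "index_family I" "1 \<le> d" shows "card ({1..d} - I d) = bdim I d"
  using index_family_subset[OF assms] unfolding bdim_def
  by (simp add: card_Diff_subset finite_subset)

text \<open>Part (i) lower bound: the m-subsets of {1..d} - I d are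
  (vacuously) upward closed and have eigenvalue at least min 1 (lam 2) ^ m.\<close>

lemma binomial_bdim_le_info_compl:
  assumes E: "eigen_seq lam" and L1: "lam 1 \<ge> 1" and L2: "lam 2 > 0"
    and IF: "index_family I" and d: "d \<ge> 1" and e: "\<epsilon> > 0"
    and em: "\<epsilon>\<^sup>2 < min 1 (lam 2) ^ m"
  shows "bdim I d choose m \<le> info_compl_sym lam I \<epsilon> d"
proof -
  define F where "F = {J. J \<subseteq> {1..d} - I d \<and> card J = m}"
  have "bdim I d choose m = card F"
    unfolding F_def using n_subsets[of "{1..d} - I d" m] card_complement_index_set[OF IF d]
    by simp
  also have "card F \<le> info_compl_sym lam I \<epsilon> d"
  proof (rule card_le_info_compl_sym[where I = I and d = d, OF E e index_family_subset[OF IF d]])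
    show "F \<subseteq> Pow {1..d}" unfolding F_def by blast
  next
    fix J i j assume "J \<in> F" "i \<in> I d" "i \<in> J"
    then show "j \<in> J" unfolding F_def by blast
  next
    fix J assume "J \<in> F"
    then have J: "J \<subseteq> {1..d}" "card J = m" unfolding F_def by auto
    have "\<epsilon>\<^sup>2 < min 1 (lam 2) ^ m" by (rule em)
    also have "\<dots> \<le> lam 2 ^ m" using L2 by (intro power_mono) auto
    also have "\<dots> \<le> lam 2 ^ m * lam 1 ^ (d - m)" using L1 L2 by (simp add: one_le_power)
    finally show "\<epsilon>\<^sup>2 < lam 2 ^ card J * lam 1 ^ (d - card J)" using J by simp
  qed
  finally show ?thesis .
qed

lemma powr_of_power: "0 < (\<delta>::real) \<Longrightarrow> (\<delta> ^ m) powr a = (\<delta> powr a) ^ m"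
  by (simp add: powr_power powr_realpow[symmetric] powr_powr mult.commute)

lemma sqrt_half_power_powr:
  fixes \<delta> p :: real
  assumes "0 < \<delta>"
  shows "sqrt (\<delta> ^ m / 2) powr (- p) = 2 powr (p/2) * (\<delta> powr (-p/2)) ^ m"
  using assms by (simp add: powr_half_sqrt[symmetric] powr_powr powr_divide powr_minus_divide
      powr_of_power power_one_over mult.commute)

text \<open>Inserting \<epsilon> = sqrt (min 1 (lam 2) ^ m / 2) into an upper bound of the
  form C \<epsilon>^(-p) F turns the previous lemma into an explicit bound
  on the binomial coefficient, exponential in m.\<close>

lemma binomial_bdim_le_tractability_bound:
  assumes E: "eigen_seq lam" and L1: "lam 1 \<ge> 1" and L2: "lam 2 > 0"
    and IF: "index_family I" and d: "d \<ge> 1"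
    and H: "\<And>\<epsilon>. 0 < \<epsilon> \<Longrightarrow> \<epsilon> \<le> 1 \<Longrightarrow> real (info_compl_sym lam I \<epsilon> d) \<le> C * \<epsilon> powr (-p) * F"
  shows "real (bdim I d choose m) \<le> C * 2 powr (p/2) * (min 1 (lam 2) powr (-p/2)) ^ m * F"
proof -
  define \<delta> where "\<delta> = min 1 (lam 2)"
  have \<delta>: "0 < \<delta> ^ m" "\<delta> ^ m \<le> 1" unfolding \<delta>_def using L2 by (auto simp: power_le_one)
  define \<epsilon> where "\<epsilon> = sqrt (\<delta> ^ m / 2)"
  have \<epsilon>: "0 < \<epsilon>" "\<epsilon> \<le> 1" "\<epsilon>\<^sup>2 < \<delta> ^ m" unfolding \<epsilon>_def using \<delta> by auto
  have "real (bdim I d choose m) \<le> real (info_compl_sym lam I \<epsilon> d)"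
    using binomial_bdim_le_info_compl[OF E L1 L2 IF d \<epsilon>(1)] \<epsilon>(3) unfolding \<delta>_def by simp
  also have "\<dots> \<le> C * \<epsilon> powr (-p) * F" by (rule H[OF \<epsilon>(1,2)])
  also have "\<epsilon> powr (-p) = 2 powr (p/2) * (\<delta> powr (-p/2)) ^ m"
    unfolding \<epsilon>_def by (rule sqrt_half_power_powr) (use L2 in \<open>simp add: \<delta>_def\<close>)
  finally show ?thesis unfolding \<delta>_def by (simp only: mult.assoc)
qed

text \<open>If a binomial coefficient grows at most geometrically in its lower index,
  the upper index is at most linear in it: (b/m)^m \<le> (b choose m).\<close>

lemma le_of_binomial_le_power:
  fixes R :: real
  assumes R: "1 \<le> R" and m: "1 \<le> m" and bin: "real (b choose m) \<le> R ^ m"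
  shows "real b \<le> real m * R"
proof (cases "m \<le> b")
  case False
  then have "real b \<le> real m" by simp
  also have "\<dots> \<le> real m * R" using mult_left_mono[OF R, of "real m"] by simp
  finally show ?thesis .
next
  case True
  have "(real b / real m) ^ m \<le> real (b choose m)"
    by (rule binomial_ge_n_over_k_pow_k[OF True])
  then have "(real b / real m) ^ Suc (m - 1) \<le> R ^ Suc (m - 1)"
    using bin m by simp
  then have "real b / real m \<le> R"
    by (rule power_le_imp_le_base) (use R in simp)
  then show ?thesis using m by (simp add: divide_le_eq mult_ac)
qed

lemma one_le_ln:
  assumes "(3::nat) \<le> d" shows "1 \<le> ln (real d)"
proof -
  have "exp 1 \<le> real d" using exp_le assms by linarith
  then have "ln (exp 1) \<le> ln (real d)" using assms by (subst ln_le_cancel_iff) auto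
  then show ?thesis by simp
qed

text \<open>Part (i): with m \<approx> ln d the factor d^q is absorbed into
  R^m, so b_d \<le> m R = O(ln d).\<close>

lemma poly_tractable_bdim:
  assumes E: "eigen_seq lam" and L1: "lam 1 \<ge> 1" and L2: "lam 2 > 0"
    and IF: "index_family I" and PT: "poly_tractable (info_compl_sym lam I)"
  shows "(\<lambda>d. real (bdim I d)) \<in> O(\<lambda>d. ln (real d))"
proof -
  obtain C p q where pq: "p > 0" "q \<ge> 0" and
    H: "\<And>d \<epsilon>. d \<ge> 1 \<Longrightarrow> 0 < \<epsilon> \<Longrightarrow> \<epsilon> \<le> 1 \<Longrightarrow>
          real (info_compl_sym lam I \<epsilon> d) \<le> C * \<epsilon> powr (-p) * real d powr q"
    using PT unfolding poly_tractable_def by blast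
  define A where "A = min 1 (lam 2) powr (-p/2)"
  define K where "K = max 1 (C * 2 powr (p/2))"
  define R where "R = K * A * exp q"
  have A: "1 \<le> A" unfolding A_def
    using L2 pq powr_le1[of "p/2" "min 1 (lam 2)"] by (simp add: powr_minus_divide)
  have K: "1 \<le> K" unfolding K_def by simp
  have "1 \<le> K * A" using mult_mono[OF K A] K by simp
  then have R: "1 \<le> R" unfolding R_def using mult_mono[of 1 "K * A" 1 "exp q"] pq by simp
  have binom: "real (bdim I d choose m) \<le> R ^ m"
    if d: "1 \<le> d" and m: "1 \<le> m" "ln (real d) \<le> real m" for d m
  proof -
    have "real d powr q = exp (ln (real d) * q)" using d by (simp add: powr_def)
    also have "\<dots> \<le> exp q ^ m"
      using m pq by (simp add: exp_of_nat_mult[symmetric] mult_right_mono)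
    finally have dq: "real d powr q \<le> exp q ^ m" .
    have "real (bdim I d choose m) \<le> C * 2 powr (p/2) * A ^ m * real d powr q"
      unfolding A_def by (rule binomial_bdim_le_tractability_bound[OF E L1 L2 IF d H[OF d]])
    also have "\<dots> \<le> K ^ m * A ^ m * exp q ^ m"
    proof (intro mult_mono)
      show "C * 2 powr (p/2) \<le> K ^ m"
        using power_increasing[OF m(1) K] unfolding K_def by simp
    qed (use A K dq in auto)
    also have "\<dots> = R ^ m" unfolding R_def by (simp add: power_mult_distrib)
    finally show ?thesis .
  qed
  have bound: "real (bdim I d) \<le> 2 * R * ln (real d)" if d: "3 \<le> d" for d
  proof -
    define m where "m = nat \<lceil>ln (real d)\<rceil>"
    have L: "1 \<le> ln (real d)" using one_le_ln[OF d] .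
    have m: "1 \<le> m" "ln (real d) \<le> real m" "real m \<le> 2 * ln (real d)"
      unfolding m_def using L by linarith+
    have "real (bdim I d) \<le> real m * R"
      using le_of_binomial_le_power[OF R m(1) binom] d m by simp
    also have "\<dots> \<le> 2 * ln (real d) * R" using R m(3) by (intro mult_right_mono) auto
    finally show ?thesis by (simp add: mult_ac)
  qed
  have "eventually (\<lambda>d. 3 \<le> d) (at_top :: nat filter)" by (rule eventually_ge_at_top)
  then have "eventually (\<lambda>d. norm (real (bdim I d)) \<le> 2 * R * norm (ln (real d))) at_top"
  proof eventually_elim
    case (elim d)
    then show ?case using bound[OF elim] one_le_ln[OF elim] by simp
  qed
  then show ?thesis by (rule bigoI)
qed
text \<open>Part (ii), boundedness: the binomial bound with m = 1 and q = 0.\<close>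

lemma strongly_poly_tractable_bdim_bounded:
  assumes E: "eigen_seq lam" and L1: "lam 1 \<ge> 1" and L2: "lam 2 > 0"
    and IF: "index_family I" and SPT: "strongly_poly_tractable (info_compl_sym lam I)"
  shows "\<exists>B. \<forall>d\<ge>1. real (bdim I d) \<le> B"
proof -
  obtain C p where
    H: "\<And>d \<epsilon>. d \<ge> 1 \<Longrightarrow> 0 < \<epsilon> \<Longrightarrow> \<epsilon> \<le> 1 \<Longrightarrow>
          real (info_compl_sym lam I \<epsilon> d) \<le> C * \<epsilon> powr (-p)"
    using SPT unfolding strongly_poly_tractable_def by blast
  have "real (bdim I d) \<le> C * 2 powr (p/2) * min 1 (lam 2) powr (-p/2)" if d: "1 \<le> d" for d
    using binomial_bdim_le_tractability_bound[OF E L1 L2 IF d, of C p 1 1] H[OF d] by simp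
  then show ?thesis by blast
qed

text \<open>If lam 1 * lam 2 \<ge> 1, every upper tail {i \<in> I d. s \<le> i} with 2 s \<ge> d + 2 has at
  most d/2 elements, so its indicator multi-index has eigenvalue \<ge> 1; distinct
  starting points s give distinct tails.\<close>

lemma upper_half_le_info_compl:
  assumes E: "eigen_seq lam" and L1: "lam 1 \<ge> 1" and L2: "lam 2 > 0"
    and IF: "index_family I" and d: "1 \<le> d" and LL: "1 \<le> lam 2 * lam 1"
    and e: "0 < \<epsilon>" "\<epsilon> < 1"
  shows "card {s \<in> I d. d + 2 \<le> 2 * s} \<le> info_compl_sym lam I \<epsilon> d"
proof -
  define S where "S = {s \<in> I d. d + 2 \<le> 2 * s}"
  define tail where "tail s = {i \<in> I d. s \<le> i}" for s
  have Id: "I d \<subseteq> {1..d}" by (rule index_family_subset[OF IF d])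
  have "inj_on tail S"
  proof (rule inj_onI)
    fix s s' assume "s \<in> S" "s' \<in> S" "tail s = tail s'"
    then have "s \<in> tail s'" "s' \<in> tail s" unfolding tail_def S_def by auto
    then show "s = s'" unfolding tail_def by auto
  qed
  then have "card S = card (tail ` S)" by (simp add: card_image)
  also have "\<dots> \<le> info_compl_sym lam I \<epsilon> d"
  proof (rule card_le_info_compl_sym[where I = I and d = d, OF E e(1) Id])
    show "tail ` S \<subseteq> Pow {1..d}" using Id by (auto simp: tail_def)
  next
    fix T i j assume "T \<in> tail ` S" "i \<in> I d" "j \<in> I d" "i \<le> j" "i \<in> T"
    then show "j \<in> T" by (auto simp: tail_def)
  next
    fix T assume "T \<in> tail ` S"
    then obtain s where s: "s \<in> S" and T: "T = tail s" by blast
    define t where "t = card T"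
    have "T \<subseteq> {s..d}" using Id unfolding T tail_def by auto
    then have "t \<le> d + 1 - s" unfolding t_def using card_mono[of "{s..d}" T] by simp
    moreover have "d + 2 \<le> 2 * s" using s unfolding S_def by simp
    ultimately have t: "t \<le> d - t" by arith
    have "\<epsilon>\<^sup>2 < 1" using e by (simp add: power_less_one_iff)
    also have "1 \<le> (lam 2 * lam 1) ^ t" using LL by (rule one_le_power)
    also have "\<dots> = lam 2 ^ t * lam 1 ^ t" by (rule power_mult_distrib)
    also have "\<dots> \<le> lam 2 ^ t * lam 1 ^ (d - t)"
      using L1 L2 t by (intro mult_left_mono power_increasing) auto
    finally show "\<epsilon>\<^sup>2 < lam 2 ^ card T * lam 1 ^ (d - card T)" unfolding t_def .
  qed
  finally show ?thesis unfolding S_def .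
qed

text \<open>Part (ii), the eigenvalue condition: otherwise, for d = 2 N + 2, at least
  N + 1 - b_d tails contribute to n(1/2, d), which is bounded independently of d.\<close>

lemma strongly_poly_tractable_eigenvalues:
  assumes E: "eigen_seq lam" and L1: "lam 1 \<ge> 1" and L2: "lam 2 > 0"
    and IF: "index_family I" and SPT: "strongly_poly_tractable (info_compl_sym lam I)"
  shows "lam 2 < 1 / lam 1"
proof (rule ccontr)
  assume "\<not> lam 2 < 1 / lam 1"
  then have "1 / lam 1 \<le> lam 2" by simp
  then have LL: "1 \<le> lam 2 * lam 1" using L1 by (simp add: divide_le_eq)
  obtain C p where
    H: "\<And>d \<epsilon>. d \<ge> 1 \<Longrightarrow> 0 < \<epsilon> \<Longrightarrow> \<epsilon> \<le> 1 \<Longrightarrow>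
          real (info_compl_sym lam I \<epsilon> d) \<le> C * \<epsilon> powr (-p)"
    using SPT unfolding strongly_poly_tractable_def by blast
  obtain B where B: "\<And>d. 1 \<le> d \<Longrightarrow> real (bdim I d) \<le> B"
    using strongly_poly_tractable_bdim_bounded[OF E L1 L2 IF SPT] by blast
  define N where "N = nat \<lceil>C * (1/2) powr (-p) + B\<rceil>"
  define d where "d = 2 * N + 2"
  have d: "1 \<le> d" unfolding d_def by simp
  have "N + 1 = card {N + 2..d}" unfolding d_def by simp
  also have "\<dots> \<le> card ({s \<in> I d. d + 2 \<le> 2 * s} \<union> ({1..d} - I d))"
  proof (rule card_mono)
    show "finite ({s \<in> I d. d + 2 \<le> 2 * s} \<union> ({1..d} - I d))"
      using index_family_subset[OF IF d] by (simp add: finite_subset)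
    show "{N + 2..d} \<subseteq> {s \<in> I d. d + 2 \<le> 2 * s} \<union> ({1..d} - I d)"
      unfolding d_def by auto
  qed
  also have "\<dots> \<le> card {s \<in> I d. d + 2 \<le> 2 * s} + card ({1..d} - I d)"
    by (rule card_Un_le)
  also have "\<dots> \<le> info_compl_sym lam I (1/2) d + bdim I d"
    using upper_half_le_info_compl[OF E L1 L2 IF d LL, of "1/2"]
      card_complement_index_set[OF IF d] by simp
  finally have "real N + 1 \<le> real (info_compl_sym lam I (1/2) d) + real (bdim I d)"
    by linarith
  moreover have "real (info_compl_sym lam I (1/2) d) \<le> C * (1/2) powr (-p)"
    using H[OF d] by simp
  moreover have "C * (1/2) powr (-p) + B \<le> real N" unfolding N_def by linarith
  ultimately show False using B[OF d] by linarith
qed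

theorem proposition4:
  fixes lam :: "nat \<Rightarrow> real" and I :: "nat \<Rightarrow> nat set"
  assumes "eigen_seq lam" and "lam 2 > 0" and "index_family I"
    and "lam 1 \<ge> 1"
  shows "(poly_tractable (info_compl_sym lam I) \<longrightarrow>
            (\<lambda>d. real (bdim I d)) \<in> O(\<lambda>d. ln (real d)))
       \<and> (strongly_poly_tractable (info_compl_sym lam I) \<longrightarrow>
            (\<lambda>d. real (bdim I d)) \<in> O(\<lambda>_. 1) \<and> lam 2 < 1 / lam 1)"
proof (intro conjI impI)
  assume "poly_tractable (info_compl_sym lam I)"
  then show "(\<lambda>d. real (bdim I d)) \<in> O(\<lambda>d. ln (real d))"
    by (rule poly_tractable_bdim[OF assms(1,4,2,3)])
next
  assume SPT: "strongly_poly_tractable (info_compl_sym lam I)"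
  obtain B where B: "\<forall>d\<ge>1. real (bdim I d) \<le> B"
    using strongly_poly_tractable_bdim_bounded[OF assms(1,4,2,3) SPT] by blast
  have "eventually (\<lambda>d. norm (real (bdim I d)) \<le> B * norm (1::real)) at_top"
    using eventually_ge_at_top[of "1::nat"] by eventually_elim (use B in simp)
  then show "(\<lambda>d. real (bdim I d)) \<in> O(\<lambda>_. 1)" by (rule bigoI)
next
  assume "strongly_poly_tractable (info_compl_sym lam I)"
  then show "lam 2 < 1 / lam 1"
    by (rule strongly_poly_tractable_eigenvalues[OF assms(1,4,2,3)])
qed

end
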